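(* Let $k\geq 4$ and $j\geq k+2$ be integers. Then $$j+\Big\lfloor\frac{j-1}{k+1}\Big\rfloor\leq R_k^{\mathcal{CA}}(k+3,j)\leq j-1+\Big\lceil\frac{j-1}{k}\Big\rceil,$$ where $\mathcal{CA}$ is the class of cacti.
   Context: All graphs are finite and simple. For a graph $G$ and a nonnegative integer $k$, a $k$-sparse $j$-set is a set of $j$ vertices of $G$ inducing a subgraph of maximum degree at most $k$; a $k$-dense $i$-set is a set of $i$ vertices of $G$ that is $k$-sparse in the complement of $G$. For a graph class $\mathcal{G}$, $R_k^{\mathcal{G}}(i,j)$ is the smallest natural number $n$ such that every graph on $n$ vertices in $\mathcal{G}$ has either a $k$-dense $i$-set or a $k$-sparse $j$-set. A cactus is a graph (not necessarily connected) in which every block is a cycle, a single edge, or a single vertex. *)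

theory Defs
  imports Complex_Main
begin

definition simple_graph :: "'a set \<Rightarrow> 'a set set \<Rightarrow> bool" where
  "simple_graph V E \<longleftrightarrow> finite V \<and>
     E \<subseteq> {e. \<exists>u v. u \<in> V \<and> v \<in> V \<and> u \<noteq> v \<and> e = {u, v}}"

definition adj_rel :: "'a set set \<Rightarrow> ('a \<times> 'a) set" where
  "adj_rel E = {(u, v). {u, v} \<in> E \<and> u \<noteq> v}"

(* connected (the empty graph counts as connected) *)
definition connected_graph :: "'a set \<Rightarrow> 'a set set \<Rightarrow> bool" where
  "connected_graph W F \<longleftrightarrow> (\<forall>u\<in>W. \<forall>v\<in>W. (u, v) \<in> (adj_rel F)\<^sup>*)"

definition subgraph :: "'a set \<Rightarrow> 'a set set \<Rightarrow> 'a set \<Rightarrow> 'a set set \<Rightarrow> bool" where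
  "subgraph W F V E \<longleftrightarrow> W \<subseteq> V \<and> F \<subseteq> E \<and> (\<forall>e\<in>F. e \<subseteq> W)"

definition nonseparable :: "'a set \<Rightarrow> 'a set set \<Rightarrow> bool" where
  "nonseparable W F \<longleftrightarrow> W \<noteq> {} \<and> connected_graph W F \<and>
     (\<forall>v\<in>W. connected_graph (W - {v}) {e \<in> F. v \<notin> e})"

definition is_block :: "'a set \<Rightarrow> 'a set set \<Rightarrow> 'a set \<Rightarrow> 'a set set \<Rightarrow> bool" where
  "is_block V E W F \<longleftrightarrow> subgraph W F V E \<and> nonseparable W F \<and>
     (\<forall>W' F'. subgraph W' F' V E \<and> nonseparable W' F' \<and> W \<subseteq> W' \<and> F \<subseteq> F'
        \<longrightarrow> W' = W \<and> F' = F)"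

definition is_cycle_graph :: "'a set \<Rightarrow> 'a set set \<Rightarrow> bool" where
  "is_cycle_graph W F \<longleftrightarrow> (\<exists>xs. distinct xs \<and> set xs = W \<and> length xs \<ge> 3 \<and>
     F = {{xs ! i, xs ! ((i + 1) mod length xs)} | i. i < length xs})"

definition is_single_edge :: "'a set \<Rightarrow> 'a set set \<Rightarrow> bool" where
  "is_single_edge W F \<longleftrightarrow> card W = 2 \<and> F = {W}"

definition is_single_vertex :: "'a set \<Rightarrow> 'a set set \<Rightarrow> bool" where
  "is_single_vertex W F \<longleftrightarrow> card W = 1 \<and> F = {}"

definition cactus :: "'a set \<Rightarrow> 'a set set \<Rightarrow> bool" where
  "cactus V E \<longleftrightarrow> simple_graph V E \<and>
     (\<forall>W F. is_block V E W F \<longrightarrow>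
        is_cycle_graph W F \<or> is_single_edge W F \<or> is_single_vertex W F)"

definition k_sparse :: "'a set \<Rightarrow> 'a set set \<Rightarrow> nat \<Rightarrow> 'a set \<Rightarrow> bool" where
  "k_sparse V E k S \<longleftrightarrow> S \<subseteq> V \<and> (\<forall>v\<in>S. card {u \<in> S. {u, v} \<in> E} \<le> k)"

definition k_dense :: "'a set \<Rightarrow> 'a set set \<Rightarrow> nat \<Rightarrow> 'a set \<Rightarrow> bool" where
  "k_dense V E k S \<longleftrightarrow> S \<subseteq> V \<and> (\<forall>v\<in>S. card {u \<in> S. u \<noteq> v \<and> {u, v} \<notin> E} \<le> k)"

(* R_k^CA(i,j); graphs on n vertices are represented (up to isomorphism) with vertex set {..<n} *)
definition R_cactus :: "nat \<Rightarrow> nat \<Rightarrow> nat \<Rightarrow> nat" where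
  "R_cactus k i j = (LEAST n. \<forall>E :: nat set set. cactus {..<n} E \<longrightarrow>
      (\<exists>S. card S = i \<and> k_dense {..<n} E k S) \<or> (\<exists>S. card S = j \<and> k_sparse {..<n} E k S))"

end

theory Submission
  imports Defs "HOL-Library.Product_Order"
begin

(* In a cactus every nonseparable subgraph has maximum degree at most 2. Hence, if
   every vertex of U has at least two neighbours in U, then U contains a pendant set S, joined to
   the rest of U through a single vertex c, whose vertices have degree at most 2 in U: for S
   minimal, S together with c is nonseparable. An induction that deletes a vertex, drops an
   isolated vertex, contracts a leaf, shortcuts a path of degree-2 vertices or contracts a
   pendant set, while recording for every vertex v an allowance t v of neighbours it may keep and
   a weight w v of original vertices it stands for, produces a set X with (k + 1) |X| < n whose
   deletion leaves maximum degree at most k. For n = j - 1 + ceil ((j - 1) / k) this forces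
   |X| < ceil ((j - 1) / k), so at least j vertices remain.

   For n < j + floor ((j - 1) / (k + 1)) the disjoint union of n + 1 - j stars
   K_{1,k+1} fits into n vertices and is a cactus. Every set of k + 3 vertices contains a vertex
   with at most one neighbour in it (a leaf, or any vertex if only centres are chosen), so it is
   not k-dense; a set of j vertices misses only n - j of them, so it contains a whole star, whose
   centre then has degree k + 1. *)

lemma adj_rel_iff [simp]: "(a, b) \<in> adj_rel F \<longleftrightarrow> {a, b} \<in> F \<and> a \<noteq> b"
  unfolding adj_rel_def by simp

lemma adj_rel_rtrancl_sym:
  assumes "(x, y) \<in> (adj_rel F)\<^sup>*" shows "(y, x) \<in> (adj_rel F)\<^sup>*"
proof -
  have "sym (adj_rel F)" unfolding sym_def by (auto simp: insert_commute)
  then show ?thesis using assms sym_rtrancl unfolding sym_def by blast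
qed

lemma adj_rel_rtrancl_mono:
  assumes "(x, y) \<in> (adj_rel F)\<^sup>*" "F \<subseteq> F'" shows "(x, y) \<in> (adj_rel F')\<^sup>*"
proof -
  have "adj_rel F \<subseteq> adj_rel F'" using assms(2) unfolding adj_rel_def by auto
  then show ?thesis using assms(1) rtrancl_mono by blast
qed

lemma simple_graph_edge_neq:
  assumes "simple_graph V E" "{u, v} \<in> E" shows "u \<noteq> v"
  using assms unfolding simple_graph_def
  by (smt (verit, ccfv_threshold) doubleton_eq_iff insert_absorb2 mem_Collect_eq subsetD)

lemma simple_graph_finite_edges:
  assumes "simple_graph V E" shows "finite E"
proof -
  have "E \<subseteq> Pow V" "finite V" using assms unfolding simple_graph_def by auto
  then show ?thesis by (meson finite_Pow_iff finite_subset)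
qed

lemma subgraph_finite:
  assumes "simple_graph V E" "subgraph W F V E" shows "finite W" "finite F"
  using assms simple_graph_finite_edges[OF assms(1)]
  unfolding simple_graph_def subgraph_def by (auto intro: finite_subset)

lemma rtrancl_first_step:
  assumes "(p, q) \<in> R\<^sup>*" "p \<noteq> q" obtains u where "(p, u) \<in> R"
  using assms by (cases rule: converse_rtranclE) auto

lemma simple_graph_edgeE:
  assumes "simple_graph V E" "e \<in> E" obtains a b where "e = {a, b}" "a \<noteq> b" "a \<in> V" "b \<in> V"
  using assms unfolding simple_graph_def by blast

lemma card_2_elem_other:
  assumes "card A = 2" "b \<in> A" obtains a where "A = {a, b}" "a \<noteq> b"
proof -
  obtain x y where xy: "A = {x, y}" "x \<noteq> y" using assms(1) by (meson card_2_iff)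
  show ?thesis
  proof (cases "b = x")
    case True then show ?thesis using that[of y] xy by (simp add: insert_commute)
  next
    case False then show ?thesis using that[of x] xy assms(2) by simp
  qed
qed

definition deg_in :: "'a set set \<Rightarrow> 'a set \<Rightarrow> 'a \<Rightarrow> nat" where
  "deg_in E A v = card {u \<in> A. {u, v} \<in> E}"

lemma deg_in_mono: "A \<subseteq> B \<Longrightarrow> finite B \<Longrightarrow> deg_in E A u \<le> deg_in E B u"
  unfolding deg_in_def by (rule card_mono) auto

lemma deg_in_le_card: "finite A \<Longrightarrow> deg_in E A u \<le> card A"
  unfolding deg_in_def by (rule card_mono) auto

lemma deg_in_Un:
  assumes "finite A" "finite B" "A \<inter> B = {}"
  shows "deg_in E (A \<union> B) u = deg_in E A u + deg_in E B u"
proof -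
  have "{x \<in> A \<union> B. {x, u} \<in> E} = {x \<in> A. {x, u} \<in> E} \<union> {x \<in> B. {x, u} \<in> E}" by auto
  then show ?thesis unfolding deg_in_def using assms by (simp add: card_Un_disjoint disjoint_iff)
qed

lemma deg_in_insert:
  assumes "finite A" "v \<notin> A"
  shows "deg_in E (insert v A) u = deg_in E A u + (if {v, u} \<in> E then 1 else 0)"
proof -
  have "{x \<in> insert v A. {x, u} \<in> E} =
      (if {v, u} \<in> E then insert v {x \<in> A. {x, u} \<in> E} else {x \<in> A. {x, u} \<in> E})" by auto
  then show ?thesis unfolding deg_in_def using assms by simp
qed

lemma deg_in_insert_neighbourhood:
  assumes "finite A" "v \<notin> A" "y \<in> U" "{x \<in> U. {x, v} \<in> E} = N"
  shows "deg_in E (insert v A) y = deg_in E A y + (if y \<in> N then 1 else 0)"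
proof -
  have "{v, y} \<in> E \<longleftrightarrow> y \<in> N" using assms(3,4) by (auto simp: insert_commute)
  then show ?thesis using deg_in_insert[OF assms(1,2)] by simp
qed

lemma sum_fun_upd_add:
  fixes w :: "'a \<Rightarrow> nat"
  assumes "finite U" "u \<in> U"
  shows "sum (w(u := w u + d)) U = sum w U + d"
proof -
  have "sum (w(u := w u + d)) U = w u + d + sum (w(u := w u + d)) (U - {u})"
    using assms by (simp add: sum.remove)
  also have "sum (w(u := w u + d)) (U - {u}) = sum w (U - {u})" by (rule sum.cong) auto
  finally show ?thesis using assms by (simp add: sum.remove)
qed

lemma sum_remove_pair:
  assumes "finite U" "a \<in> U" "b \<in> U" "a \<noteq> b"
  shows "sum w U = w a + w b + sum w (U - {a, b})"
proof -
  have "sum w U = w a + sum w (U - {a})" using assms by (simp add: sum.remove)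
  also have "sum w (U - {a}) = w b + sum w (U - {a} - {b})" using assms by (simp add: sum.remove)
  also have "U - {a} - {b} = U - {a, b}" by auto
  finally show ?thesis by (simp add: add.assoc)
qed

lemma k_sparse_subset:
  assumes "k_sparse V E k S" "T \<subseteq> S" "finite S" shows "k_sparse V E k T"
  unfolding k_sparse_def
proof (intro conjI ballI)
  show "T \<subseteq> V" using assms(1,2) unfolding k_sparse_def by auto
  fix v assume "v \<in> T"
  have "card {u \<in> T. {u, v} \<in> E} \<le> card {u \<in> S. {u, v} \<in> E}"
    using assms(2,3) by (intro card_mono) auto
  also have "\<dots> \<le> k" using assms(1,2) \<open>v \<in> T\<close> unfolding k_sparse_def by auto
  finally show "card {u \<in> T. {u, v} \<in> E} \<le> k" .
qed

section \<open>Blocks of cacti\<close>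

lemma mod_Suc_eq_imp_pred:
  fixes i L :: nat
  assumes "(i + 1) mod L = p" "i < L"
  shows "i = (p + L - 1) mod L"
proof (cases "i + 1 = L")
  case False
  then have "p = i + 1" using assms by simp
  then show ?thesis using assms(2) by simp
qed (use assms in simp)

lemma cycle_graph_neighbours:
  assumes "is_cycle_graph W F" obtains a b where "{u. {u, v} \<in> F} \<subseteq> {a, b}"
proof -
  obtain xs where xs: "distinct xs" "length xs \<ge> 3"
    and F: "F = {{xs ! i, xs ! ((i + 1) mod length xs)} | i. i < length xs}"
    using assms unfolding is_cycle_graph_def by blast
  define L where "L = length xs"
  have L: "L \<ge> 3" using xs(2) L_def by simp
  show ?thesis
  proof (cases "v \<in> set xs")
    case False
    have "e \<subseteq> set xs" if e: "e \<in> F" for e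
    proof -
      obtain i where "i < L" "e = {xs ! i, xs ! ((i + 1) mod L)}" using e F L_def by auto
      moreover have "(i + 1) mod L < L" using L by simp
      ultimately show ?thesis unfolding L_def by (simp add: nth_mem)
    qed
    then have "{u. {u, v} \<in> F} = {}" using False by blast
    then show ?thesis using that by blast
  next
    case True
    then obtain p where p: "p < L" "v = xs ! p" unfolding L_def by (metis in_set_conv_nth)
    have "u \<in> {xs ! ((p + 1) mod L), xs ! ((p + L - 1) mod L)}" if "{u, v} \<in> F" for u
    proof -
      obtain i where i: "i < L" "{u, v} = {xs ! i, xs ! ((i + 1) mod L)}"
        using \<open>{u, v} \<in> F\<close> F L_def by auto
      have succ: "(i + 1) mod L < L" using L by simp
      consider "u = xs ! i" "v = xs ! ((i + 1) mod L)" | "v = xs ! i" "u = xs ! ((i + 1) mod L)"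
        using i(2) by (metis doubleton_eq_iff)
      then show ?thesis
      proof cases
        case 1
        then have "(i + 1) mod L = p"
          using p succ xs(1) L_def by (simp add: nth_eq_iff_index_eq)
        then have "i = (p + L - 1) mod L" using i(1) by (rule mod_Suc_eq_imp_pred)
        then show ?thesis using 1 by simp
      next
        case 2
        then have "i = p" using p i xs(1) L_def by (simp add: nth_eq_iff_index_eq)
        then show ?thesis using 2 by simp
      qed
    qed
    then show ?thesis using that by blast
  qed
qed

lemma cactus_block_degree_le_2:
  assumes "is_cycle_graph W F \<or> is_single_edge W F \<or> is_single_vertex W F"
  shows "card {u. {u, v} \<in> F} \<le> 2"
  using assms
proof (elim disjE)
  assume "is_cycle_graph W F"
  then obtain a b where "{u. {u, v} \<in> F} \<subseteq> {a, b}" by (rule cycle_graph_neighbours)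
  then have "card {u. {u, v} \<in> F} \<le> card {a, b}" by (intro card_mono) auto
  also have "\<dots> \<le> 2" by (simp add: card_insert_if)
  finally show ?thesis .
next
  assume "is_single_edge W F"
  then have sub: "{u. {u, v} \<in> F} \<subseteq> W" and W: "card W = 2"
    unfolding is_single_edge_def by auto
  have "finite W" using W by (intro card_ge_0_finite) simp
  then show ?thesis using card_mono[OF _ sub] W by simp
qed (simp add: is_single_vertex_def)

lemma nonseparable_subgraph_in_block:
  assumes G: "simple_graph V E" and WF: "subgraph W F V E" "nonseparable W F"
  obtains W' F' where "is_block V E W' F'" "W \<subseteq> W'" "F \<subseteq> F'"
proof -
  define A where "A = {(W', F'). subgraph W' F' V E \<and> nonseparable W' F'}"
  have "A \<subseteq> Pow V \<times> Pow E" unfolding A_def subgraph_def by auto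
  moreover have "finite V" "finite E"
    using G simple_graph_finite_edges[OF G] unfolding simple_graph_def by auto
  ultimately have "finite A" by (meson finite_Pow_iff finite_SigmaI finite_subset)
  moreover have "(W, F) \<in> A" using WF unfolding A_def by simp
  ultimately obtain B where B: "B \<in> A" "(W, F) \<le> B" and max: "\<forall>C\<in>A. B \<le> C \<longrightarrow> B = C"
    using finite_has_maximal2 by blast
  obtain W' F' where B_eq: "B = (W', F')" by fastforce
  have "is_block V E W' F'"
    unfolding is_block_def
  proof (intro conjI allI impI)
    fix W'' F'' assume "subgraph W'' F'' V E \<and> nonseparable W'' F'' \<and> W' \<subseteq> W'' \<and> F' \<subseteq> F''"
    then have "(W'', F'') \<in> A" "B \<le> (W'', F'')" unfolding A_def B_eq by auto
    then have "B = (W'', F'')" using max by blast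
    then show "W'' = W'" "F'' = F'" using B_eq by auto
  qed (use B B_eq A_def in auto)
  then show ?thesis using that B(2) B_eq by auto
qed

definition nonseparable_deg_le_2 :: "'a set \<Rightarrow> 'a set set \<Rightarrow> bool" where
  "nonseparable_deg_le_2 V E \<longleftrightarrow> (\<forall>W F. subgraph W F V E \<and> nonseparable W F \<longrightarrow>
      (\<forall>v\<in>W. card {u. {u, v} \<in> F} \<le> 2))"

lemma cactus_nonseparable_deg_le_2:
  assumes "cactus V E" shows "nonseparable_deg_le_2 V E"
  unfolding nonseparable_deg_le_2_def
proof (intro allI impI ballI)
  fix W F v assume "subgraph W F V E \<and> nonseparable W F"
  then have WF: "subgraph W F V E" "nonseparable W F" by auto
  have G: "simple_graph V E" using assms unfolding cactus_def by simp
  obtain W' F' where B: "is_block V E W' F'" "W \<subseteq> W'" "F \<subseteq> F'"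
    using nonseparable_subgraph_in_block[OF G WF] .
  then have "is_cycle_graph W' F' \<or> is_single_edge W' F' \<or> is_single_vertex W' F'"
    using assms unfolding cactus_def by blast
  then have "card {u. {u, v} \<in> F'} \<le> 2" by (rule cactus_block_degree_le_2)
  moreover have "finite {u. {u, v} \<in> F'}"
  proof -
    have sub: "subgraph W' F' V E" using B unfolding is_block_def by simp
    then have "{u. {u, v} \<in> F'} \<subseteq> W'" unfolding subgraph_def by auto
    then show ?thesis using subgraph_finite(1)[OF G sub] by (rule finite_subset)
  qed
  moreover have "{u. {u, v} \<in> F} \<subseteq> {u. {u, v} \<in> F'}" using B(3) by auto
  ultimately show "card {u. {u, v} \<in> F} \<le> 2" by (meson card_mono le_trans)
qed

lemma nonseparable_card_le_2_edge_or_vertex: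
  assumes G: "simple_graph V E" and sub: "subgraph W F V E" and ns: "nonseparable W F"
    and small: "card W \<le> 2"
  shows "is_single_edge W F \<or> is_single_vertex W F"
proof -
  have FE: "F \<subseteq> E" and FW: "\<And>e. e \<in> F \<Longrightarrow> e \<subseteq> W" using sub unfolding subgraph_def by auto
  have edge: "\<exists>a b. e = {a, b} \<and> a \<noteq> b" if "e \<in> F" for e
    using G FE that by (meson simple_graph_edgeE subsetD)
  have "finite W" using subgraph_finite[OF G sub] by simp
  moreover have "W \<noteq> {}" using ns unfolding nonseparable_def by simp
  ultimately have "card W \<noteq> 0" by simp
  then consider "card W = 1" | "card W = 2" using small by linarith
  then show ?thesis
  proof cases
    case 1
    then obtain w where "W = {w}" by (rule card_1_singletonE)
    then have "F = {}" using edge FW by fastforce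
    then show ?thesis using 1 unfolding is_single_vertex_def by simp
  next
    case 2
    then obtain p q where pq: "W = {p, q}" "p \<noteq> q" by (meson card_2_iff)
    then have "(p, q) \<in> (adj_rel F)\<^sup>*"
      using ns unfolding nonseparable_def connected_graph_def by blast
    then obtain u where "(p, u) \<in> adj_rel F" using pq(2) by (rule rtrancl_first_step)
    then have e: "{p, u} \<in> F" "u \<noteq> p" by auto
    then have "u = q" using FW[OF e(1)] pq by auto
    then have "W \<in> F" using e(1) pq(1) by simp
    moreover have "e = W" if "e \<in> F" for e
      using edge[OF that] FW[OF that] pq by auto
    ultimately have "F = {W}" by blast
    then show ?thesis using 2 unfolding is_single_edge_def by simp
  qed
qed

lemma cactus_if_nonseparable_card_le_2:
  assumes G: "simple_graph V E"
    and small: "\<And>W F. subgraph W F V E \<Longrightarrow> nonseparable W F \<Longrightarrow> card W \<le> 2"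
  shows "cactus V E"
  unfolding cactus_def
proof (intro conjI allI impI)
  fix W F assume "is_block V E W F"
  then have "subgraph W F V E" "nonseparable W F" unfolding is_block_def by auto
  then show "is_cycle_graph W F \<or> is_single_edge W F \<or> is_single_vertex W F"
    using nonseparable_card_le_2_edge_or_vertex[OF G] small by blast
qed (rule G)

section \<open>Pendant sets\<close>

abbreviation induced_edges :: "'a set set \<Rightarrow> 'a set \<Rightarrow> 'a set set" where
  "induced_edges E W \<equiv> {e \<in> E. e \<subseteq> W}"

definition pendant :: "'a set set \<Rightarrow> 'a set \<Rightarrow> 'a set \<Rightarrow> 'a \<Rightarrow> bool" where
  "pendant E U S c \<longleftrightarrow> S \<subseteq> U \<and> S \<noteq> {} \<and> c \<in> U \<and> c \<notin> S \<and>
     (\<forall>s\<in>S. \<forall>u\<in>U. {u, s} \<in> E \<longrightarrow> u \<in> S \<or> u = c)"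

definition minimal_pendant :: "'a set set \<Rightarrow> 'a set \<Rightarrow> 'a set \<Rightarrow> 'a \<Rightarrow> bool" where
  "minimal_pendant E U S c \<longleftrightarrow> pendant E U S c \<and> (\<forall>S' c'. S' \<subset> S \<longrightarrow> \<not> pendant E U S' c')"

lemma pendant_deg_in_outside:
  assumes pe: "pendant E U S c" and y: "y \<in> U - S" "y \<noteq> c"
  shows "deg_in E S y = 0"
proof -
  have "{x \<in> S. {x, y} \<in> E} = {}" using pe y unfolding pendant_def by (auto simp: insert_commute)
  then show ?thesis unfolding deg_in_def by (metis card.empty)
qed

lemma minimal_pendant_exists:
  assumes U: "finite U" "v \<in> U" "U \<noteq> {v}"
  obtains S c where "minimal_pendant E U S c"
proof -
  have "pendant E U (U - {v}) v" using U unfolding pendant_def by auto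
  then obtain P where P: "pendant E U (fst P) (snd P)"
    and least: "\<forall>Q. pendant E U (fst Q) (snd Q) \<longrightarrow> card (fst P) \<le> card (fst Q)"
    using ex_has_least_nat[of "\<lambda>Q. pendant E U (fst Q) (snd Q)" "(U - {v}, v)" "\<lambda>Q. card (fst Q)"]
    by auto
  have "\<not> pendant E U S' c'" if S': "S' \<subset> fst P" for S' c'
  proof
    assume "pendant E U S' c'"
    then have "card (fst P) \<le> card S'" using least[rule_format, of "(S', c')"] by simp
    moreover have "finite (fst P)" using P U(1) unfolding pendant_def by (meson finite_subset)
    then have "card S' < card (fst P)" using S' by (rule psubset_card_mono)
    ultimately show False by simp
  qed
  then have "minimal_pendant E U (fst P) (snd P)" using P unfolding minimal_pendant_def by blast
  then show ?thesis by (rule that)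
qed

lemma pendant_reachable_pendant:
  assumes G: "simple_graph V E" and pe: "pendant E U S c" and z: "z \<in> insert c S"
    and x: "x \<in> S" "x \<noteq> z"
    and unreached: "z = c \<or> (x, c) \<notin> (adj_rel {e \<in> induced_edges E (insert c S). z \<notin> e})\<^sup>*"
  shows "pendant E U
    {y \<in> S - {z}. (x, y) \<in> (adj_rel {e \<in> induced_edges E (insert c S). z \<notin> e})\<^sup>*} z"
    (is "pendant E U ?K z")
  unfolding pendant_def
proof (intro conjI ballI impI)
  let ?R = "adj_rel {e \<in> induced_edges E (insert c S). z \<notin> e}"
  show "?K \<subseteq> U" "?K \<noteq> {}" "z \<in> U" "z \<notin> ?K" using pe x z unfolding pendant_def by auto
  fix y u assume y: "y \<in> ?K" and u: "u \<in> U" and e: "{u, y} \<in> E"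
  show "u \<in> ?K \<or> u = z"
  proof (cases "u = z")
    case False
    have yS: "y \<in> S" "y \<noteq> z" "(x, y) \<in> ?R\<^sup>*" using y by auto
    have uSc: "u \<in> S \<or> u = c" using pe yS(1) u e unfolding pendant_def by blast
    have "{y, u} \<in> {e \<in> induced_edges E (insert c S). z \<notin> e}"
      using e uSc yS False by (auto simp: insert_commute)
    then have "(y, u) \<in> ?R" using simple_graph_edge_neq[OF G e] by simp
    with yS(3) have "(x, u) \<in> ?R\<^sup>*" by (rule rtrancl_into_rtrancl)
    then show ?thesis using uSc unreached False by auto
  qed simp
qed

lemma minimal_pendant_connected_without_attachment:
  assumes G: "simple_graph V E" and mp: "minimal_pendant E U S c" and xy: "x \<in> S" "y \<in> S"
  shows "(x, y) \<in> (adj_rel {e \<in> induced_edges E (insert c S). c \<notin> e})\<^sup>*"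
proof -
  let ?K = "{y \<in> S - {c}. (x, y) \<in> (adj_rel {e \<in> induced_edges E (insert c S). c \<notin> e})\<^sup>*}"
  have pe: "pendant E U S c" using mp unfolding minimal_pendant_def by simp
  then have "x \<noteq> c" using xy(1) unfolding pendant_def by auto
  then have "pendant E U ?K c" using pendant_reachable_pendant[OF G pe insertI1 xy(1)] by simp
  moreover have "?K \<subseteq> S" by auto
  ultimately have "?K = S" using mp unfolding minimal_pendant_def by blast
  then show ?thesis using xy(2) by auto
qed

lemma minimal_pendant_reaches_attachment:
  assumes G: "simple_graph V E" and mp: "minimal_pendant E U S c"
    and z: "z \<in> S" and x: "x \<in> S" "x \<noteq> z"
  shows "(x, c) \<in> (adj_rel {e \<in> induced_edges E (insert c S). z \<notin> e})\<^sup>*"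
proof (rule ccontr)
  let ?K = "{y \<in> S - {z}. (x, y) \<in> (adj_rel {e \<in> induced_edges E (insert c S). z \<notin> e})\<^sup>*}"
  assume "(x, c) \<notin> (adj_rel {e \<in> induced_edges E (insert c S). z \<notin> e})\<^sup>*"
  moreover have pe: "pendant E U S c" using mp unfolding minimal_pendant_def by simp
  ultimately have "pendant E U ?K z" using pendant_reachable_pendant[OF G pe _ x] z by auto
  moreover have "?K \<subset> S" using z by auto
  ultimately show False using mp unfolding minimal_pendant_def by blast
qed

lemma minimal_pendant_attached:
  assumes G: "simple_graph V E" and mp: "minimal_pendant E U S c"
    and deg: "\<forall>v\<in>U. deg_in E U v \<noteq> 0"
  obtains s where "s \<in> S" "{s, c} \<in> E"
proof (rule ccontr)
  assume detached: "\<not> thesis"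
  have pe: "pendant E U S c" using mp unfolding minimal_pendant_def by simp
  then obtain s where s: "s \<in> S" "s \<in> U" unfolding pendant_def by auto
  then have "{u \<in> U. {u, s} \<in> E} \<noteq> {}" using deg unfolding deg_in_def by (metis card.empty)
  then obtain u where u: "u \<in> U" "{u, s} \<in> E" by blast
  have clo: "\<And>y w. y \<in> S \<Longrightarrow> w \<in> U \<Longrightarrow> {w, y} \<in> E \<Longrightarrow> w \<in> S"
    using pe detached that unfolding pendant_def by (metis insert_commute)
  have "u \<in> S - {s}" using clo[OF s(1) u] simple_graph_edge_neq[OF G u(2)] by simp
  then have "pendant E U (S - {s}) s"
    using pe s clo unfolding pendant_def by auto
  moreover have "S - {s} \<subset> S" using s by auto
  ultimately show False using mp unfolding minimal_pendant_def by blast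
qed

lemma minimal_pendant_connected_avoiding:
  assumes G: "simple_graph V E" and mp: "minimal_pendant E U S c"
    and z: "z \<in> insert c S" and ab: "a \<in> insert c S - {z}" "b \<in> insert c S - {z}"
  shows "(a, b) \<in> (adj_rel {e \<in> induced_edges E (insert c S). z \<notin> e})\<^sup>*"
proof (cases "z = c")
  case True
  have "c \<notin> S" using mp unfolding minimal_pendant_def pendant_def by simp
  then have "a \<in> S" "b \<in> S" using ab True by auto
  then show ?thesis unfolding True by (rule minimal_pendant_connected_without_attachment[OF G mp])
next
  case False
  then have zS: "z \<in> S" using z by simp
  let ?R = "adj_rel {e \<in> induced_edges E (insert c S). z \<notin> e}"
  have reach_c: "(y, c) \<in> ?R\<^sup>*" if y: "y \<in> insert c S - {z}" for y
  proof (cases "y = c")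
    case False
    then have "y \<in> S" "y \<noteq> z" using y by auto
    then show ?thesis by (rule minimal_pendant_reaches_attachment[OF G mp zS])
  qed simp
  have "(a, c) \<in> ?R\<^sup>*" using ab(1) by (rule reach_c)
  moreover have "(c, b) \<in> ?R\<^sup>*" using reach_c[OF ab(2)] by (rule adj_rel_rtrancl_sym)
  ultimately show ?thesis by (rule rtrancl_trans)
qed

lemma minimal_pendant_nonseparable:
  assumes G: "simple_graph V E" and mp: "minimal_pendant E U S c"
    and deg: "\<forall>v\<in>U. deg_in E U v \<noteq> 0"
  shows "nonseparable (insert c S) (induced_edges E (insert c S))"
proof -
  define W where "W = insert c S"
  define F where "F = induced_edges E W"
  obtain s1 where s1: "s1 \<in> S" "{s1, c} \<in> E" using minimal_pendant_attached[OF G mp deg] .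
  have to_c: "(a, c) \<in> (adj_rel F)\<^sup>*" if "a \<in> W" for a
  proof (cases "a = c")
    case False
    then have "a \<in> S" using that W_def by simp
    then have "(a, s1) \<in> (adj_rel {e \<in> F. c \<notin> e})\<^sup>*"
      unfolding F_def W_def by (rule minimal_pendant_connected_without_attachment[OF G mp _ s1(1)])
    then have "(a, s1) \<in> (adj_rel F)\<^sup>*" by (rule adj_rel_rtrancl_mono) auto
    moreover have "(s1, c) \<in> adj_rel F"
      using s1 simple_graph_edge_neq[OF G s1(2)] unfolding F_def W_def by simp
    ultimately show ?thesis by (rule rtrancl_into_rtrancl)
  qed simp
  have "(a, b) \<in> (adj_rel F)\<^sup>*" if "a \<in> W" "b \<in> W" for a b
    using to_c[OF that(1)] adj_rel_rtrancl_sym[OF to_c[OF that(2)]] by (rule rtrancl_trans)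
  then show ?thesis
    using minimal_pendant_connected_avoiding[OF G mp]
    unfolding nonseparable_def connected_graph_def W_def F_def by blast
qed

lemma exists_pendant_deg_le_2:
  assumes G: "simple_graph V E" and nd: "nonseparable_deg_le_2 V E"
    and U: "U \<subseteq> V" "U \<noteq> {}" and deg: "\<forall>v\<in>U. 2 \<le> deg_in E U v"
  obtains S c where "pendant E U S c" "\<forall>s\<in>S. deg_in E U s \<le> 2"
proof -
  have fU: "finite U" using G U(1) unfolding simple_graph_def by (meson finite_subset)
  obtain v where v: "v \<in> U" using U(2) by blast
  have "U \<noteq> {v}"
  proof
    assume "U = {v}"
    then have "{u \<in> U. {u, v} \<in> E} \<subseteq> {v}" by auto
    then have "deg_in E U v \<le> 1" unfolding deg_in_def using card_mono[of "{v}"] by fastforce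
    then show False using deg v by force
  qed
  then obtain S c where mp: "minimal_pendant E U S c" using minimal_pendant_exists[OF fU v] by blast
  have pe: "pendant E U S c" using mp unfolding minimal_pendant_def by simp
  have "\<forall>v\<in>U. deg_in E U v \<noteq> 0" using deg by force
  then have ns: "nonseparable (insert c S) (induced_edges E (insert c S))"
    by (rule minimal_pendant_nonseparable[OF G mp])
  have sub: "subgraph (insert c S) (induced_edges E (insert c S)) V E"
    using pe U(1) unfolding subgraph_def pendant_def by auto
  have "deg_in E U s \<le> 2" if s: "s \<in> S" for s
  proof -
    have "{u \<in> U. {u, s} \<in> E} \<subseteq> {u. {u, s} \<in> induced_edges E (insert c S)}"
    proof
      fix u assume u: "u \<in> {u \<in> U. {u, s} \<in> E}"
      then have "u \<in> S \<or> u = c" using pe s unfolding pendant_def by blast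
      then show "u \<in> {u. {u, s} \<in> induced_edges E (insert c S)}" using u s by auto
    qed
    moreover have "finite {u. {u, s} \<in> induced_edges E (insert c S)}"
      using pe fU unfolding pendant_def by (auto intro: finite_subset)
    moreover have "card {u. {u, s} \<in> induced_edges E (insert c S)} \<le> 2"
      using nd sub ns s unfolding nonseparable_deg_le_2_def by blast
    ultimately show ?thesis unfolding deg_in_def by (meson card_mono le_trans)
  qed
  then show ?thesis using that pe by blast
qed

section \<open>Deleting few vertices to bound the degree\<close>

(* t v is the number of neighbours that v may keep, w v the number of original vertices that v
   stands for; admissibility lets a vertex whose allowance has dropped pay for its own deletion. *)
definition admissible_weights :: "nat \<Rightarrow> 'a set \<Rightarrow> ('a \<Rightarrow> int) \<Rightarrow> ('a \<Rightarrow> nat) \<Rightarrow> bool" where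
  "admissible_weights k U t w \<longleftrightarrow> (\<forall>v\<in>U. 1 \<le> w v \<and> int k + 1 - t v \<le> int (w v))"

definition good_deletion ::
    "'a set set \<Rightarrow> nat \<Rightarrow> 'a set \<Rightarrow> ('a \<Rightarrow> int) \<Rightarrow> ('a \<Rightarrow> nat) \<Rightarrow> 'a set \<Rightarrow> bool" where
  "good_deletion E k U t w X \<longleftrightarrow> X \<subseteq> U \<and> (\<forall>v\<in>U - X. int (deg_in E (U - X) v) \<le> t v) \<and>
     (X = {} \<or> (k + 1) * card X < sum w U)"

lemma admissible_weights_subset:
  "admissible_weights k U t w \<Longrightarrow> U' \<subseteq> U \<Longrightarrow> admissible_weights k U' t w"
  unfolding admissible_weights_def by blast

lemma admissible_weights_transfer:
  assumes adm: "admissible_weights k U t w" and "U' \<subseteq> U" "d \<le> int e"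
  shows "admissible_weights k U' (t(u := t u - d)) (w(u := w u + e))"
  unfolding admissible_weights_def
proof
  fix x assume "x \<in> U'"
  then have "1 \<le> w x" "int k + 1 - t x \<le> int (w x)"
    using adm \<open>U' \<subseteq> U\<close> unfolding admissible_weights_def by auto
  then show "1 \<le> (w(u := w u + e)) x \<and> int k + 1 - (t(u := t u - d)) x \<le> int ((w(u := w u + e)) x)"
    using \<open>d \<le> int e\<close> by auto
qed

lemma good_deletion_insert_count:
  assumes X: "good_deletion E k U' t' w' X" and fU: "finite U'" and x: "x \<notin> U'"
    and budget: "sum w' U' + (k + 1) \<le> b" "k + 1 < b"
  shows "(k + 1) * card (insert x X) < b"
proof (cases "X = {}")
  case False
  have "X \<subseteq> U'" using X unfolding good_deletion_def by simp
  then have "card (insert x X) = card X + 1"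
    using fU x by (subst card_insert_disjoint) (auto intro: rev_finite_subset)
  moreover have "(k + 1) * card X < sum w' U'" using X False unfolding good_deletion_def by simp
  ultimately show ?thesis using budget(1) by simp
qed (use budget in simp)

lemma good_deletion_delete_vertex:
  assumes fU: "finite U" and v: "v \<in> U" "t v \<le> 0" "t v < 0 \<or> U \<noteq> {v}"
    and adm: "admissible_weights k U t w" and X: "good_deletion E k (U - {v}) t w X"
  shows "good_deletion E k U t w (insert v X)"
proof -
  have wv: "int k + 1 - t v \<le> int (w v)" using adm v unfolding admissible_weights_def by blast
  have sum_U: "sum w U = sum w (U - {v}) + w v" using fU v by (simp add: sum.remove)
  have "k + 1 < sum w (U - {v}) + w v"
  proof (cases "t v < 0")
    case False
    then obtain u where u: "u \<in> U - {v}" using v(1,3) by blast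
    then have "1 \<le> w u" using adm unfolding admissible_weights_def by simp
    also have "w u \<le> sum w (U - {v})" using u fU by (intro member_le_sum) auto
    finally show ?thesis using wv v(2) by linarith
  qed (use wv in linarith)
  then have "(k + 1) * card (insert v X) < sum w U"
    using good_deletion_insert_count[OF X] fU wv v(2) sum_U by simp
  moreover have "U - insert v X = (U - {v}) - X" by auto
  ultimately show ?thesis using X v(1) unfolding good_deletion_def by auto
qed

lemma good_deletion_add_isolated:
  assumes fU: "finite U" and v: "v \<in> U" "deg_in E U v = 0" "0 \<le> t v"
    and X: "good_deletion E k (U - {v}) t w X"
  shows "good_deletion E k U t w X"
proof -
  have XU: "X \<subseteq> U - {v}" using X unfolding good_deletion_def by simp
  have "int (deg_in E (U - X) y) \<le> t y" if y: "y \<in> U - X" for y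
  proof (cases "y = v")
    case True
    have "deg_in E (U - X) v \<le> deg_in E U v" using fU by (intro deg_in_mono) auto
    then show ?thesis using True v by simp
  next
    case False
    have N: "{u \<in> U. {u, v} \<in> E} = {}" using v(2) fU unfolding deg_in_def by simp
    have yU: "y \<in> U" using y by simp
    have "U - X = insert v (U - {v} - X)" using XU v by auto
    then have "deg_in E (U - X) y = deg_in E (U - {v} - X) y"
      using deg_in_insert_neighbourhood[OF _ _ yU N, of "U - {v} - X"] fU by simp
    then show ?thesis using X y False unfolding good_deletion_def by simp
  qed
  moreover have "sum w (U - {v}) \<le> sum w U" using fU by (intro sum_mono2) auto
  ultimately show ?thesis using X XU unfolding good_deletion_def by auto
qed

lemma good_deletion_add_leaf:
  assumes fU: "finite U" and v: "v \<in> U" "1 \<le> t v" and u: "u \<in> U" "u \<noteq> v"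
    and N: "{x \<in> U. {x, v} \<in> E} = {u}"
    and X: "good_deletion E k (U - {v}) (t(u := t u - 1)) (w(u := w u + w v)) X"
  shows "good_deletion E k U t w X"
proof -
  let ?A = "U - {v} - X"
  have XU: "X \<subseteq> U - {v}" using X unfolding good_deletion_def by simp
  have fA: "finite ?A" using fU by simp
  have vA: "v \<notin> ?A" by simp
  have UX: "U - X = insert v ?A" using XU v(1) by blast
  have sum_eq: "sum (w(u := w u + w v)) (U - {v}) = sum w U"
  proof -
    have "sum (w(u := w u + w v)) (U - {v}) = sum w (U - {v}) + w v"
      using fU u by (intro sum_fun_upd_add) auto
    also have "\<dots> = sum w U" using fU v(1) by (simp add: sum.remove)
    finally show ?thesis .
  qed
  have "int (deg_in E (U - X) y) \<le> t y" if y: "y \<in> U - X" for y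
  proof (cases "y = v")
    case True
    have "deg_in E (U - X) v \<le> deg_in E U v" using fU by (intro deg_in_mono) auto
    also have "deg_in E U v = 1" using N unfolding deg_in_def by simp
    finally show ?thesis using True v(2) by simp
  next
    case False
    then have yA: "y \<in> ?A" using y by simp
    then have old: "int (deg_in E ?A y) \<le> (t(u := t u - 1)) y"
      using X unfolding good_deletion_def by blast
    then show ?thesis
      using old deg_in_insert_neighbourhood[OF fA vA _ N, of y] yA unfolding UX by auto
  qed
  then show ?thesis using X XU sum_eq unfolding good_deletion_def by auto
qed

lemma good_deletion_delete_neighbour:
  assumes fU: "finite U" and v: "v \<in> U" "t v = 1"
    and ab: "a \<in> U" "b \<in> U" "a \<noteq> b" "v \<noteq> a" "v \<noteq> b"
    and N: "{x \<in> U. {x, v} \<in> E} = {a, b}" and b: "deg_in E U b \<le> 2" "2 \<le> t b"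
    and adm: "admissible_weights k U t w" and X: "good_deletion E k (U - {v, a}) t w X"
  shows "good_deletion E k U t w (insert a X)"
proof -
  let ?A = "U - {v, a} - X"
  have XU: "X \<subseteq> U - {v, a}" using X unfolding good_deletion_def by simp
  have fA: "finite ?A" using fU by simp
  have vA: "v \<notin> ?A" by simp
  have UX: "U - insert a X = insert v ?A" using XU v(1) ab by blast
  have "int (deg_in E (U - insert a X) y) \<le> t y" if y: "y \<in> U - insert a X" for y
  proof -
    consider "y = v" | "y = b" | "y \<in> ?A" "y \<noteq> b" using y UX by blast
    then show ?thesis
    proof cases
      case 1
      have "{x \<in> U - insert a X. {x, v} \<in> E} \<subseteq> {b}" using N by auto
      then have "deg_in E (U - insert a X) v \<le> card {b}"
        unfolding deg_in_def by (intro card_mono) auto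
      then show ?thesis using 1 v(2) by simp
    next
      case 2
      have "deg_in E (U - insert a X) b \<le> deg_in E U b" using fU by (intro deg_in_mono) auto
      then show ?thesis using 2 b by simp
    next
      case 3
      then have "deg_in E (U - insert a X) y = deg_in E ?A y"
        using deg_in_insert_neighbourhood[OF fA vA _ N, of y] 3 unfolding UX by auto
      then show ?thesis using X 3(1) unfolding good_deletion_def by simp
    qed
  qed
  moreover have "(k + 1) * card (insert a X) < sum w U"
  proof -
    have "int k + 1 - t v \<le> int (w v)" "1 \<le> w a" "1 \<le> w b"
      using adm v(1) ab unfolding admissible_weights_def by blast+
    moreover have "w b \<le> sum w (U - {v, a})" using fU ab by (intro member_le_sum) auto
    ultimately have "sum w (U - {v, a}) + (k + 1) \<le> sum w U" "k + 1 < sum w U"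
      using sum_remove_pair[OF fU v(1) ab(1) ab(4), of w] v(2) by linarith+
    then show ?thesis using good_deletion_insert_count[OF X] fU by simp
  qed
  ultimately show ?thesis using XU ab unfolding good_deletion_def by auto
qed

(* On a path a - v - b through vertices of allowance one, deleting b lets v keep its edge to a,
   which is charged to the allowance of a; the weights of v and b, at least k each, pay for b. *)
lemma good_deletion_merge_path:
  assumes fU: "finite U" and k: "2 \<le> k" and v: "v \<in> U" "t v = 1"
    and ab: "a \<in> U" "b \<in> U" "a \<noteq> b" "v \<noteq> a" "v \<noteq> b"
    and N: "{x \<in> U. {x, v} \<in> E} = {a, b}" and b: "t b = 1"
    and adm: "admissible_weights k U t w"
    and X: "good_deletion E k (U - {v, b}) (t(a := t a - 1)) (w(a := w a + 1)) X"
  shows "good_deletion E k U t w (insert b X)"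
proof -
  let ?A = "U - {v, b} - X"
  have XU: "X \<subseteq> U - {v, b}" using X unfolding good_deletion_def by simp
  have fA: "finite ?A" using fU by simp
  have vA: "v \<notin> ?A" by simp
  have UX: "U - insert b X = insert v ?A" using XU v(1) ab by blast
  have "int (deg_in E (U - insert b X) y) \<le> t y" if y: "y \<in> U - insert b X" for y
  proof (cases "y = v")
    case True
    have "{x \<in> U - insert b X. {x, v} \<in> E} \<subseteq> {a}" using N by auto
    then have "deg_in E (U - insert b X) v \<le> card {a}"
      unfolding deg_in_def by (intro card_mono) auto
    then show ?thesis using True v(2) by simp
  next
    case False
    then have yA: "y \<in> ?A" using y UX by blast
    then have old: "int (deg_in E ?A y) \<le> (t(a := t a - 1)) y"
      using X unfolding good_deletion_def by blast
    then show ?thesis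
      using old deg_in_insert_neighbourhood[OF fA vA _ N, of y] yA unfolding UX by auto
  qed
  moreover have "(k + 1) * card (insert b X) < sum w U"
  proof -
    have "int k + 1 - t v \<le> int (w v)" "int k + 1 - t b \<le> int (w b)"
      using adm v(1) ab unfolding admissible_weights_def by blast+
    moreover have "sum (w(a := w a + 1)) (U - {v, b}) = sum w (U - {v, b}) + 1"
      using fU ab by (intro sum_fun_upd_add) auto
    ultimately have "sum (w(a := w a + 1)) (U - {v, b}) + (k + 1) \<le> sum w U" "k + 1 < sum w U"
      using sum_remove_pair[OF fU v(1) ab(2) ab(5), of w] v(2) b k by linarith+
    then show ?thesis using good_deletion_insert_count[OF X] fU by simp
  qed
  ultimately show ?thesis using XU ab unfolding good_deletion_def by auto
qed

(* S is contracted into c, which takes over the weight of S and the edges between S and c. *)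
lemma good_deletion_add_pendant:
  assumes fU: "finite U" and pe: "pendant E U S c"
    and S: "\<forall>s\<in>S. 2 \<le> t s \<and> deg_in E U s \<le> 2"
    and X: "good_deletion E k (U - S) (t(c := t c - int (deg_in E S c))) (w(c := w c + sum w S)) X"
  shows "good_deletion E k U t w X"
proof -
  have SU: "S \<subseteq> U" "c \<in> U" "c \<notin> S" using pe unfolding pendant_def by auto
  have fS: "finite S" using SU(1) fU by (rule finite_subset)
  have XU: "X \<subseteq> U - S" using X unfolding good_deletion_def by simp
  let ?A = "U - S - X"
  have fA: "finite ?A" using fU by simp
  have UX: "U - X = ?A \<union> S" using XU SU by blast
  have "int (deg_in E (U - X) y) \<le> t y" if y: "y \<in> U - X" for y
  proof (cases "y \<in> S")
    case True
    have "deg_in E (U - X) y \<le> deg_in E U y" using fU by (intro deg_in_mono) auto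
    then show ?thesis using True S by force
  next
    case False
    then have yA: "y \<in> ?A" using y by blast
    then have old: "int (deg_in E ?A y) \<le> (t(c := t c - int (deg_in E S c))) y"
      using X unfolding good_deletion_def by blast
    have split: "deg_in E (U - X) y = deg_in E ?A y + deg_in E S y"
      unfolding UX using fA fS by (intro deg_in_Un) auto
    show ?thesis
    proof (cases "y = c")
      case True
      then show ?thesis using old split by simp
    next
      case False
      then have "deg_in E S y = 0" using pendant_deg_in_outside[OF pe] yA by simp
      then show ?thesis using old split False by simp
    qed
  qed
  moreover have "sum (w(c := w c + sum w S)) (U - S) = sum w U"
  proof -
    have "sum (w(c := w c + sum w S)) (U - S) = sum w (U - S) + sum w S"
      using fU SU by (intro sum_fun_upd_add) auto
    also have "\<dots> = sum w U" using fU SU(1) by (metis add.commute sum.subset_diff)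
    finally show ?thesis .
  qed
  ultimately show ?thesis using X XU unfolding good_deletion_def by auto
qed

lemma good_deletion_exists_leaf_case:
  assumes G: "simple_graph V E" and fU: "finite U"
    and v: "v \<in> U" "deg_in E U v = 1" "1 \<le> t v" and adm: "admissible_weights k U t w"
    and IH: "\<And>t' w'. admissible_weights k (U - {v}) t' w' \<Longrightarrow> \<exists>X. good_deletion E k (U - {v}) t' w' X"
  shows "\<exists>X. good_deletion E k U t w X"
proof -
  obtain u where N: "{x \<in> U. {x, v} \<in> E} = {u}"
    using v(2) unfolding deg_in_def by (rule card_1_singletonE)
  then have u: "u \<in> U" "{u, v} \<in> E" by auto
  have "u \<noteq> v" using simple_graph_edge_neq[OF G u(2)] .
  have "1 \<le> w v" using adm v(1) unfolding admissible_weights_def by blast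
  then have "admissible_weights k (U - {v}) (t(u := t u - 1)) (w(u := w u + w v))"
    by (intro admissible_weights_transfer[OF adm]) auto
  then obtain X where "good_deletion E k (U - {v}) (t(u := t u - 1)) (w(u := w u + w v)) X"
    using IH by blast
  then have "good_deletion E k U t w X"
    by (rule good_deletion_add_leaf[where t = t, OF fU v(1,3) u(1) \<open>u \<noteq> v\<close> N])
  then show ?thesis ..
qed

lemma good_deletion_exists_path_case:
  assumes G: "simple_graph V E" and fU: "finite U" and k: "2 \<le> k"
    and v: "v \<in> U" "t v = 1" "deg_in E U v = 2"
    and b: "b \<in> U" "{b, v} \<in> E" "deg_in E U b = 2"
    and t1: "\<forall>x\<in>U. 1 \<le> t x" and adm: "admissible_weights k U t w"
    and IH: "\<And>U' t' w'. U' \<subset> U \<Longrightarrow> admissible_weights k U' t' w' \<Longrightarrow>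
      \<exists>X. good_deletion E k U' t' w' X"
  shows "\<exists>X. good_deletion E k U t w X"
proof -
  have "card {x \<in> U. {x, v} \<in> E} = 2" using v(3) unfolding deg_in_def .
  moreover have "b \<in> {x \<in> U. {x, v} \<in> E}" using b(1,2) by simp
  ultimately obtain a where N: "{x \<in> U. {x, v} \<in> E} = {a, b}" "a \<noteq> b"
    by (rule card_2_elem_other)
  then have a: "a \<in> U" "{a, v} \<in> E" by auto
  have va: "v \<noteq> a" and vb: "v \<noteq> b"
    using simple_graph_edge_neq[OF G a(2)] simple_graph_edge_neq[OF G b(2)] by auto
  show ?thesis
  proof (cases "2 \<le> t b")
    case True
    have "U - {v, a} \<subset> U" "admissible_weights k (U - {v, a}) t w"
      using v(1) admissible_weights_subset[OF adm] by auto
    then obtain X where "good_deletion E k (U - {v, a}) t w X" using IH by blast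
    then have "good_deletion E k U t w (insert a X)"
      using good_deletion_delete_neighbour[where t = t,
          OF fU v(1,2) a(1) b(1) N(2) va vb N(1) _ True adm]
        b(3) by simp
    then show ?thesis ..
  next
    case False
    then have "t b = 1" using t1 b(1) by force
    have "admissible_weights k (U - {v, b}) (t(a := t a - 1)) (w(a := w a + 1))"
      by (rule admissible_weights_transfer[OF adm]) auto
    moreover have "U - {v, b} \<subset> U" using v(1) by auto
    ultimately obtain X where "good_deletion E k (U - {v, b}) (t(a := t a - 1)) (w(a := w a + 1)) X"
      using IH by blast
    then have "good_deletion E k U t w (insert b X)"
      by (rule good_deletion_merge_path[where t = t,
          OF fU k v(1,2) a(1) b(1) N(2) va vb N(1) \<open>t b = 1\<close> adm])
    then show ?thesis ..
  qed
qed

lemma good_deletion_exists_pendant_case: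
  assumes fU: "finite U" and pe: "pendant E U S c"
    and S: "\<forall>s\<in>S. 2 \<le> t s \<and> deg_in E U s \<le> 2" and adm: "admissible_weights k U t w"
    and IH: "\<And>U' t' w'. U' \<subset> U \<Longrightarrow> admissible_weights k U' t' w' \<Longrightarrow>
      \<exists>X. good_deletion E k U' t' w' X"
  shows "\<exists>X. good_deletion E k U t w X"
proof -
  have SU: "S \<subseteq> U" "S \<noteq> {}" using pe unfolding pendant_def by auto
  have "deg_in E S c \<le> card S" using SU fU by (intro deg_in_le_card) (rule finite_subset)
  also have "card S = (\<Sum>s\<in>S. 1)" by simp
  also have "\<dots> \<le> sum w S" using adm SU unfolding admissible_weights_def by (intro sum_mono) auto
  finally have "int (deg_in E S c) \<le> int (sum w S)" by (simp only: of_nat_le_iff)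
  then have "admissible_weights k (U - S)
      (t(c := t c - int (deg_in E S c))) (w(c := w c + sum w S))"
    by (intro admissible_weights_transfer[OF adm]) auto
  moreover have "U - S \<subset> U" using SU by blast
  ultimately obtain X
    where "good_deletion E k (U - S) (t(c := t c - int (deg_in E S c))) (w(c := w c + sum w S)) X"
    using IH by blast
  then have "good_deletion E k U t w X" by (rule good_deletion_add_pendant[OF fU pe S])
  then show ?thesis ..
qed

lemma good_deletion_exists_min_deg_2:
  assumes G: "simple_graph V E" and nd: "nonseparable_deg_le_2 V E" and k: "2 \<le> k"
    and U: "U \<subseteq> V" "U \<noteq> {}" and t1: "\<forall>v\<in>U. 1 \<le> t v" and d2: "\<forall>v\<in>U. 2 \<le> deg_in E U v"
    and adm: "admissible_weights k U t w"
    and IH: "\<And>U' t' w'. U' \<subset> U \<Longrightarrow> admissible_weights k U' t' w' \<Longrightarrow>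
      \<exists>X. good_deletion E k U' t' w' X"
  shows "\<exists>X. good_deletion E k U t w X"
proof -
  have fU: "finite U" using G U(1) unfolding simple_graph_def by (meson finite_subset)
  show ?thesis
  proof (cases "\<exists>v\<in>U. t v = 1 \<and> deg_in E U v = 2 \<and> (\<exists>b\<in>U. {b, v} \<in> E \<and> deg_in E U b = 2)")
    case True
    then show ?thesis using good_deletion_exists_path_case[OF G fU k _ _ _ _ _ _ t1 adm IH] by blast
  next
    case no_path: False
    obtain S c where pe: "pendant E U S c" and Sd: "\<forall>s\<in>S. deg_in E U s \<le> 2"
      using exists_pendant_deg_le_2[OF G nd U d2] by blast
    have "2 \<le> t s" if s: "s \<in> S" for s
    proof (rule ccontr)
      assume "\<not> 2 \<le> t s"
      have sU: "s \<in> U" using pe s unfolding pendant_def by auto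
      then have ts: "t s = 1" and ds: "deg_in E U s = 2"
        using \<open>\<not> 2 \<le> t s\<close> t1 Sd d2 s by force+
      then have "{x \<in> U. {x, s} \<in> E} \<noteq> {c}" "{x \<in> U. {x, s} \<in> E} \<noteq> {}"
        unfolding deg_in_def by force+
      then obtain b where b: "b \<in> U" "{b, s} \<in> E" "b \<noteq> c" by blast
      then have "b \<in> S" using pe s unfolding pendant_def by blast
      then have "deg_in E U b = 2" using Sd d2 b(1) by force
      then show False using no_path sU ts ds b by blast
    qed
    then show ?thesis using good_deletion_exists_pendant_case[OF fU pe _ adm IH] Sd by blast
  qed
qed

lemma deletion_reduction_cases [consumes 1]:
  fixes t :: "'a \<Rightarrow> int"
  assumes G: "simple_graph V E"
  obtains (nonpositive) v where "v \<in> U" "t v \<le> 0" "t v < 0 \<or> U \<noteq> {v}"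
    | (isolated) v where "v \<in> U" "deg_in E U v = 0" "0 \<le> t v"
    | (leaf) v where "v \<in> U" "deg_in E U v = 1" "1 \<le> t v"
    | (min_deg_2) "\<forall>v\<in>U. 1 \<le> t v" "\<forall>v\<in>U. 2 \<le> deg_in E U v"
proof -
  note case_rules = that
  show thesis
  proof (rule ccontr)
    assume none: "\<not> thesis"
    have t1: "1 \<le> t v" if v: "v \<in> U" for v
    proof (rule ccontr)
      assume "\<not> 1 \<le> t v"
      then have "U = {v}" "t v = 0" using case_rules(1)[OF v] none by force+
      moreover have "{v, v} \<notin> E" using simple_graph_edge_neq[OF G] by blast
      ultimately have "deg_in E U v = 0" unfolding deg_in_def by simp
      then show False using case_rules(2)[OF v] none \<open>t v = 0\<close> by simp
    qed
    have "2 \<le> deg_in E U v" if v: "v \<in> U" for v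
    proof (rule ccontr)
      assume "\<not> 2 \<le> deg_in E U v"
      then consider "deg_in E U v = 0" | "deg_in E U v = 1" by linarith
      then show False using case_rules(2,3)[OF v] t1[OF v] none by cases auto
    qed
    then show False using case_rules(4) t1 none by blast
  qed
qed

lemma good_deletion_exists:
  assumes G: "simple_graph V E" and nd: "nonseparable_deg_le_2 V E" and k: "2 \<le> k"
    and "U \<subseteq> V" "admissible_weights k U t w"
  shows "\<exists>X. good_deletion E k U t w X"
  using assms(4,5)
proof (induction "card U" arbitrary: U t w rule: less_induct)
  case less
  have fU: "finite U" using G less.prems(1) unfolding simple_graph_def by (meson finite_subset)
  have IH: "\<exists>X. good_deletion E k U' t' w' X"
    if "U' \<subset> U" "admissible_weights k U' t' w'" for U' t' w'
    using less.hyps[OF psubset_card_mono[OF fU that(1)]] that less.prems(1) by blast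
  have adm: "admissible_weights k U t w" by (rule less.prems(2))
  show ?case
  proof (cases "U = {}")
    case True
    then have "good_deletion E k U t w {}" unfolding good_deletion_def by simp
    then show ?thesis ..
  next
    case False
    from G show ?thesis
    proof (cases rule: deletion_reduction_cases[where U = U and t = t])
      case (nonpositive v)
      then obtain X where "good_deletion E k (U - {v}) t w X"
        using IH[of "U - {v}"] admissible_weights_subset[OF adm Diff_subset] by blast
      then show ?thesis
        using good_deletion_delete_vertex[where t = t, OF fU nonpositive adm] by blast
    next
      case (isolated v)
      then obtain X where "good_deletion E k (U - {v}) t w X"
        using IH[of "U - {v}"] admissible_weights_subset[OF adm Diff_subset] by blast
      then show ?thesis using good_deletion_add_isolated[where t = t, OF fU isolated] by blast
    next
      case (leaf v)
      then show ?thesis using good_deletion_exists_leaf_case[OF G fU leaf adm] IH by blast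
    next
      case min_deg_2
      then show ?thesis
        using good_deletion_exists_min_deg_2[OF G nd k less.prems(1) False min_deg_2 adm] IH
          by blast
    qed
  qed
qed

lemma cactus_large_k_sparse_set:
  assumes ca: "cactus V E" and k: "2 \<le> k"
  obtains X where "X \<subseteq> V" "X = {} \<or> (k + 1) * card X < card V" "k_sparse V E k (V - X)"
proof -
  have G: "simple_graph V E" using ca unfolding cactus_def by simp
  have "admissible_weights k V (\<lambda>_. int k) (\<lambda>_. 1)" unfolding admissible_weights_def by simp
  then obtain X where X: "good_deletion E k V (\<lambda>_. int k) (\<lambda>_. 1) X"
    using good_deletion_exists[OF G cactus_nonseparable_deg_le_2[OF ca] k] by blast
  then have "X \<subseteq> V" "X = {} \<or> (k + 1) * card X < card V"
    unfolding good_deletion_def by auto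
  moreover have "k_sparse V E k (V - X)"
    using X unfolding good_deletion_def k_sparse_def deg_in_def by auto
  ultimately show ?thesis by (rule that)
qed

lemma nat_ceiling_divide_bounds:
  fixes k m :: nat
  assumes "0 < k" "0 < m"
  shows "m \<le> k * nat \<lceil>real m / real k\<rceil>" "1 \<le> nat \<lceil>real m / real k\<rceil>"
proof -
  have k_pos: "0 < real k" using assms(1) by simp
  have "real m / real k \<le> real (nat \<lceil>real m / real k\<rceil>)" by linarith
  then have "real m \<le> real (nat \<lceil>real m / real k\<rceil>) * real k"
    using pos_divide_le_eq[OF k_pos] by blast
  then have "real m \<le> real (k * nat \<lceil>real m / real k\<rceil>)" by (simp only: of_nat_mult mult.commute)
  then show "m \<le> k * nat \<lceil>real m / real k\<rceil>" by (simp only: of_nat_le_iff)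
  have "0 < real m / real k" using assms by simp
  then have "1 \<le> \<lceil>real m / real k\<rceil>" by (simp add: one_le_ceiling)
  then show "1 \<le> nat \<lceil>real m / real k\<rceil>" by linarith
qed

lemma cactus_has_k_sparse_set:
  fixes E :: "nat set set"
  assumes k: "2 \<le> k" and j: "2 \<le> j" and ca: "cactus {..<j - 1 + nat \<lceil>real (j - 1) / real k\<rceil>} E"
  shows "\<exists>S. card S = j \<and> k_sparse {..<j - 1 + nat \<lceil>real (j - 1) / real k\<rceil>} E k S"
proof -
  define c where "c = nat \<lceil>real (j - 1) / real k\<rceil>"
  define N where "N = j - 1 + c"
  have c: "j - 1 \<le> k * c" "1 \<le> c"
    using nat_ceiling_divide_bounds[of k "j - 1"] k j unfolding c_def by auto
  obtain X where X: "X \<subseteq> {..<N}" "X = {} \<or> (k + 1) * card X < N" "k_sparse {..<N} E k ({..<N} - X)"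
    using cactus_large_k_sparse_set[OF ca[folded c_def N_def] k] by auto
  have "card X < c"
  proof (cases "X = {}")
    case False
    then have "(k + 1) * card X < (k + 1) * c" using X(2) c(1) unfolding N_def by simp
    then show ?thesis by (simp only: mult_less_cancel1)
  qed (use c in simp)
  moreover have "card ({..<N} - X) = N - card X"
    using X(1) by (simp add: card_Diff_subset finite_subset)
  ultimately have "j \<le> card ({..<N} - X)" unfolding N_def using j by linarith
  then obtain S where S: "S \<subseteq> {..<N} - X" "card S = j" by (meson obtain_subset_with_card_n)
  then have "k_sparse {..<N} E k S" using k_sparse_subset[OF X(3)] by blast
  then show ?thesis using S(2) unfolding N_def c_def by blast
qed

section \<open>Star forests and the lower bound\<close>

(* s disjoint stars on the blocks {i * m..<(i + 1) * m} for i < s, centred at i * m; the vertices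
   from s * m on are isolated. *)
definition star_forest :: "nat \<Rightarrow> nat \<Rightarrow> nat set set" where
  "star_forest m s = {{a, b} | a b. a < s * m \<and> b < s * m \<and> a div m = b div m \<and>
     a mod m = 0 \<and> b mod m \<noteq> 0}"

lemma star_forest_edgeE:
  assumes "{x, y} \<in> star_forest m s"
  obtains "x div m = y div m" "x < s * m" "y < s * m" "x mod m = 0" "y mod m \<noteq> 0"
  | "x div m = y div m" "x < s * m" "y < s * m" "y mod m = 0" "x mod m \<noteq> 0"
  using assms unfolding star_forest_def by (auto simp: doubleton_eq_iff)

lemma star_forest_leaf_neighbour:
  assumes "{x, y} \<in> star_forest m s" "x mod m \<noteq> 0"
  shows "y = x div m * m"
  using assms(1)
proof (cases rule: star_forest_edgeE)
  case 1
  then show ?thesis using assms(2) by simp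
next
  case 2
  then show ?thesis by (metis add.right_neutral div_mult_mod_eq)
qed

lemma star_forest_centre_leaf:
  assumes "i < s" "0 < l" "l < m"
  shows "{i * m, i * m + l} \<in> star_forest m s"
proof -
  have "i * m + l < (i + 1) * m" using assms by simp
  also have "\<dots> \<le> s * m" using assms by (intro mult_le_mono1) simp
  finally have "i * m + l < s * m" .
  moreover have "i * m < s * m" using assms by simp
  ultimately show ?thesis unfolding star_forest_def using assms by fastforce
qed

lemma star_forest_rtrancl_same_star:
  assumes "(x, y) \<in> (adj_rel F)\<^sup>*" "F \<subseteq> star_forest m s" shows "x div m = y div m"
  using assms(1)
proof (induction rule: rtrancl_induct)
  case (step y z)
  then have "{y, z} \<in> star_forest m s" using assms(2) by auto
  then have "y div m = z div m" by (rule star_forest_edgeE) auto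
  then show ?case using step by simp
qed simp

lemma star_forest_simple:
  assumes "s * m \<le> n" shows "simple_graph {..<n} (star_forest m s)"
  unfolding simple_graph_def
proof (intro conjI subsetI)
  fix e assume "e \<in> star_forest m s"
  then obtain a b where ab: "e = {a, b}" "a < s * m" "b < s * m" "a mod m = 0" "b mod m \<noteq> 0"
    unfolding star_forest_def by auto
  then have "a \<noteq> b" "a < n" "b < n" using assms by auto
  then show "e \<in> {e. \<exists>u v. u \<in> {..<n} \<and> v \<in> {..<n} \<and> u \<noteq> v \<and> e = {u, v}}"
    using ab(1) by blast
qed simp

lemma star_forest_nonseparable_card_le_2:
  assumes sub: "subgraph W F {..<n} (star_forest m s)" and ns: "nonseparable W F"
  shows "card W \<le> 2"
proof (rule ccontr)
  assume "\<not> card W \<le> 2"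
  have FS: "F \<subseteq> star_forest m s" and FW: "\<And>e. e \<in> F \<Longrightarrow> e \<subseteq> W"
    using sub unfolding subgraph_def by auto
  have conn: "\<And>a b. a \<in> W \<Longrightarrow> b \<in> W \<Longrightarrow> (a, b) \<in> (adj_rel F)\<^sup>*"
    using ns unfolding nonseparable_def connected_graph_def by blast
  obtain x where x: "x \<in> W" using ns unfolding nonseparable_def by blast
  define C where "C = x div m * m"
  have leaf: "a mod m \<noteq> 0" if "a \<in> W" "a \<noteq> C" for a
  proof
    assume "a mod m = 0"
    moreover have "a div m = x div m"
      using star_forest_rtrancl_same_star[OF conn[OF that(1) x] FS] .
    ultimately show False using that(2) C_def by (metis add.right_neutral div_mult_mod_eq)
  qed
  have "2 \<le> card (W - {C})" using \<open>\<not> card W \<le> 2\<close> by (auto simp: card_Diff_singleton_if)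
  then obtain T where "T \<subseteq> W - {C}" "card T = 2" by (meson obtain_subset_with_card_n)
  then obtain p q where pq: "p \<in> W - {C}" "q \<in> W - {C}" "p \<noteq> q" by (auto simp: card_2_iff)
  have "(p, q) \<in> (adj_rel {e \<in> F. C \<notin> e})\<^sup>*"
  proof (cases "C \<in> W")
    case True
    then show ?thesis using ns pq unfolding nonseparable_def connected_graph_def by blast
  next
    case False
    then have "{e \<in> F. C \<notin> e} = F" using FW by blast
    then show ?thesis using conn pq by simp
  qed
  then obtain u where "(p, u) \<in> adj_rel {e \<in> F. C \<notin> e}" using pq(3) by (rule rtrancl_first_step)
  then have e: "{p, u} \<in> F" "C \<notin> {p, u}" by auto
  have "u = p div m * m" using FS e(1) leaf pq(1) by (intro star_forest_leaf_neighbour) auto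
  also have "p div m = x div m"
    using star_forest_rtrancl_same_star[OF conn[OF _ x] FS] pq(1) by blast
  finally show False using e(2) C_def by simp
qed

lemma star_forest_cactus:
  assumes "s * m \<le> n" shows "cactus {..<n} (star_forest m s)"
  using star_forest_simple[OF assms] star_forest_nonseparable_card_le_2
  by (rule cactus_if_nonseparable_card_le_2)

lemma star_forest_no_k_dense:
  assumes S: "card S = k + 3"
  shows "\<not> k_dense V (star_forest m s) k S"
proof
  assume dense: "k_dense V (star_forest m s) k S"
  have fS: "finite S" using S by (intro card_ge_0_finite) simp
  define N where "N v = {u \<in> S. {u, v} \<in> star_forest m s}" for v
  obtain v where v: "v \<in> S" "card (N v) \<le> 1"
  proof (cases "\<exists>v\<in>S. v mod m \<noteq> 0")
    case True
    then obtain v where v: "v \<in> S" "v mod m \<noteq> 0" by blast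
    have "N v \<subseteq> {v div m * m}"
      using star_forest_leaf_neighbour[OF _ v(2)] unfolding N_def by (auto simp: insert_commute)
    then have "card (N v) \<le> 1" using card_mono[of "{v div m * m}" "N v"] by simp
    then show ?thesis using that v(1) by blast
  next
    case False
    obtain v where v: "v \<in> S" using S by fastforce
    have "N v = {}"
      using False v unfolding N_def by (auto elim: star_forest_edgeE)
    then show ?thesis using that v by simp
  qed
  have "{u \<in> S. u \<noteq> v \<and> {u, v} \<notin> star_forest m s} = (S - {v}) - N v" unfolding N_def by auto
  moreover have "card (S - {v}) - card (N v) \<le> card ((S - {v}) - N v)"
    by (rule diff_card_le_card_Diff) (simp add: N_def fS)
  moreover have "card (S - {v}) = k + 2" using S v(1) fS by simp
  ultimately have "k + 1 \<le> card {u \<in> S. u \<noteq> v \<and> {u, v} \<notin> star_forest m s}" using v(2) by simp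
  moreover have "card {u \<in> S. u \<noteq> v \<and> {u, v} \<notin> star_forest m s} \<le> k"
    using dense v(1) unfolding k_dense_def by blast
  ultimately show False by simp
qed

lemma star_forest_full_star:
  assumes S: "card S = j" "S \<subseteq> {..<n}" and s: "s * m \<le> n" "n < j + s"
  obtains i where "i < s" "\<forall>l<m. i * m + l \<in> S"
proof (rule ccontr)
  assume "\<not> thesis"
  then have "\<forall>i\<in>{..<s}. \<exists>l. l < m \<and> i * m + l \<notin> S" using that by auto
  then obtain f where f: "\<And>i. i < s \<Longrightarrow> f i < m \<and> i * m + f i \<notin> S" by (metis bchoice lessThan_iff)
  have star: "(i * m + f i) div m = i" if "i < s" for i
  proof -
    have "f i < m" using f[OF that] by blast
    then show ?thesis by (simp add: add.commute[of "i * m"])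
  qed
  have "inj_on (\<lambda>i. i * m + f i) {..<s}"
  proof (rule inj_onI)
    fix i i' assume i: "i \<in> {..<s}" "i' \<in> {..<s}" and eq: "i * m + f i = i' * m + f i'"
    have "i = (i * m + f i) div m" using star i(1) by simp
    also have "\<dots> = (i' * m + f i') div m" by (simp only: eq)
    also have "\<dots> = i'" using star i(2) by simp
    finally show "i = i'" .
  qed
  moreover have "(\<lambda>i. i * m + f i) ` {..<s} \<subseteq> {..<n} - S"
  proof
    fix x assume "x \<in> (\<lambda>i. i * m + f i) ` {..<s}"
    then obtain i where i: "i < s" "x = i * m + f i" by blast
    have "i * m + f i < (i + 1) * m" using f[OF i(1)] by simp
    also have "\<dots> \<le> s * m" using i(1) by (intro mult_le_mono1) simp
    finally show "x \<in> {..<n} - S" using f[OF i(1)] i(2) s(1) by simp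
  qed
  then have "card ((\<lambda>i. i * m + f i) ` {..<s}) \<le> card ({..<n} - S)" by (intro card_mono) auto
  ultimately have "s \<le> card ({..<n} - S)" by (simp add: card_image)
  also have "card ({..<n} - S) = n - j" using S by (simp add: card_Diff_subset finite_subset)
  finally have "s \<le> n - j" .
  moreover have "j \<le> n" using S card_mono[OF finite_lessThan S(2)] by simp
  ultimately show False using s(2) by simp
qed

lemma star_forest_no_k_sparse:
  assumes m: "k + 1 < m" and S: "card S = j" "S \<subseteq> {..<n}" and s: "s * m \<le> n" "n < j + s"
  shows "\<not> k_sparse {..<n} (star_forest m s) k S"
proof
  assume sparse: "k_sparse {..<n} (star_forest m s) k S"
  obtain i where i: "i < s" "\<forall>l<m. i * m + l \<in> S" using star_forest_full_star[OF S s] .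
  have centre: "i * m \<in> S"
    using i(2) m by (metis add_0_right zero_less_iff_neq_zero not_less0 less_trans)
  have "(\<lambda>l. i * m + l) ` {1..<m} \<subseteq> {u \<in> S. {u, i * m} \<in> star_forest m s}"
  proof (rule image_subsetI)
    fix l assume "l \<in> {1..<m}"
    then have "0 < l" "l < m" by auto
    then show "i * m + l \<in> {u \<in> S. {u, i * m} \<in> star_forest m s}"
      using i(2) star_forest_centre_leaf[OF i(1)] by (simp add: insert_commute)
  qed
  then have "card ((\<lambda>l. i * m + l) ` {1..<m}) \<le> card {u \<in> S. {u, i * m} \<in> star_forest m s}"
    using S(2) by (intro card_mono) (auto intro: finite_subset)
  moreover have "card ((\<lambda>l. i * m + l) ` {1..<m}) = m - 1" by (simp add: card_image)
  moreover have "card {u \<in> S. {u, i * m} \<in> star_forest m s} \<le> k"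
    using sparse centre unfolding k_sparse_def by blast
  ultimately show False using m by simp
qed

definition cactus_ramsey_property :: "nat \<Rightarrow> nat \<Rightarrow> nat \<Rightarrow> nat \<Rightarrow> bool" where
  "cactus_ramsey_property k i j n \<longleftrightarrow> (\<forall>E :: nat set set. cactus {..<n} E \<longrightarrow>
      (\<exists>S. card S = i \<and> k_dense {..<n} E k S) \<or> (\<exists>S. card S = j \<and> k_sparse {..<n} E k S))"

lemma R_cactus_eq_Least: "R_cactus k i j = (LEAST n. cactus_ramsey_property k i j n)"
  unfolding R_cactus_def cactus_ramsey_property_def ..

lemma cactus_ramsey_property_upper:
  assumes "2 \<le> k" "2 \<le> j"
  shows "cactus_ramsey_property k i j (j - 1 + nat \<lceil>real (j - 1) / real k\<rceil>)"
  unfolding cactus_ramsey_property_def using cactus_has_k_sparse_set[OF assms] by blast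

lemma star_forest_fits:
  fixes n j k :: nat
  assumes "n < j + (j - 1) div (k + 1)"
  shows "(n + 1 - j) * (k + 2) \<le> n"
proof (cases "n < j")
  case False
  define q where "q = (j - 1) div (k + 1)"
  have "n + 1 - j \<le> q" using assms False unfolding q_def[symmetric] by linarith
  then have "(n + 1 - j) * (k + 1) \<le> q * (k + 1)" by (rule mult_le_mono1)
  also have "\<dots> \<le> j - 1" unfolding q_def by (rule div_times_less_eq_dividend)
  finally have "(n + 1 - j) * (k + 1) \<le> j - 1" .
  moreover have "(n + 1 - j) * (k + 2) = (n + 1 - j) * (k + 1) + (n + 1 - j)" by simp
  moreover have "0 < j" using assms by (cases j) auto
  ultimately show ?thesis using False by linarith
qed simp

lemma not_cactus_ramsey_property_below:
  fixes n j k :: nat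
  assumes "n < j + (j - 1) div (k + 1)"
  shows "\<not> cactus_ramsey_property k (k + 3) j n"
proof -
  define s where "s = n + 1 - j"
  have fits: "s * (k + 2) \<le> n" unfolding s_def using assms by (rule star_forest_fits)
  have "\<not> k_sparse {..<n} (star_forest (k + 2) s) k S" if "card S = j" for S
  proof
    assume "k_sparse {..<n} (star_forest (k + 2) s) k S"
    then have "S \<subseteq> {..<n}" unfolding k_sparse_def by simp
    moreover have "n < j + s" unfolding s_def by simp
    ultimately show False using star_forest_no_k_sparse[of k "k + 2" S j n s] that fits
      \<open>k_sparse {..<n} (star_forest (k + 2) s) k S\<close> by simp
  qed
  then show ?thesis
    unfolding cactus_ramsey_property_def
    using star_forest_cactus[OF fits] star_forest_no_k_dense by blast
qed

theorem corollary4p2: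
  fixes k j :: nat
  assumes "k \<ge> 4" and "j \<ge> k + 2"
  shows "j + (j - 1) div (k + 1) \<le> R_cactus k (k + 3) j \<and>
         R_cactus k (k + 3) j \<le> j - 1 + nat \<lceil>real (j - 1) / real k\<rceil>"
proof -
  let ?P = "cactus_ramsey_property k (k + 3) j"
  have upper: "?P (j - 1 + nat \<lceil>real (j - 1) / real k\<rceil>)"
    using assms by (intro cactus_ramsey_property_upper) auto
  have "?P (LEAST n. ?P n)" using upper by (rule LeastI)
  then have "\<not> (LEAST n. ?P n) < j + (j - 1) div (k + 1)"
    using not_cactus_ramsey_property_below by blast
  moreover have "(LEAST n. ?P n) \<le> j - 1 + nat \<lceil>real (j - 1) / real k\<rceil>"
    using upper by (rule Least_le)
  ultimately show ?thesis unfolding R_cactus_eq_Least by simp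
qed

end
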